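(* Let $\mathcal U\in\mathrm{Ch}(A'B',AB)$ be a two-qubit unitary channel ($|A'|=|B'|=|A|=|B|=2$) with Choi state $\Phi^{\mathcal U}_{R_AAR_BB}$. Then the state \[ \rho_{R_BB}:=\frac{\sqrt{\Phi^{\mathcal U}_{R_BB}}}{\operatorname{tr}\sqrt{\Phi^{\mathcal U}_{R_BB}}} \] is the Choi state of a unital qubit channel from $B'$ to $B$; that is, $\operatorname{tr}_B\rho_{R_BB}=\mathbb 1_{R_B}/2$ and $\operatorname{tr}_{R_B}\rho_{R_BB}=\mathbb 1_B/2$.
   Context: Maximally entangled state $\Phi_{RX}:=\frac1{|X|}\sum_{i,j}|ii\rangle\langle jj|$; Choi state of a bipartite channel $\mathcal N$ from $A'B'$ to $AB$: $\Phi^{\mathcal N}_{R_AAR_BB}:=(\mathrm{id}_{R_AR_B}\otimes\mathcal N)(\Phi_{R_AA'}\otimes\Phi_{R_BB'})$ with $R_A\simeq A'$, $R_B\simeq B'$; $\Phi^{\mathcal U}_{R_BB}$ denotes its marginal on $R_BB$. *)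

theory Defs
  imports "HOL-Analysis.Analysis"
begin

text \<open>Operators on a finite-dimensional system with basis indexed by a finite type 'x are
  complex matrices of type complex^'x^'x. Composite systems use product index types.
  A qubit has index type 2.\<close>

type_synonym 'x op = "complex^'x^'x"

definition qadj :: "complex^'n^'m \<Rightarrow> complex^'m^'n" where
  "qadj M = (\<chi> i j. cnj (M $ j $ i))"

definition qunitary :: "'n::finite op \<Rightarrow> bool" where
  "qunitary U \<longleftrightarrow> U ** qadj U = mat 1 \<and> qadj U ** U = mat 1"

definition qtrace :: "'n::finite op \<Rightarrow> complex" where
  "qtrace M = (\<Sum>i\<in>UNIV. M $ i $ i)"

definition qpsd :: "'n::finite op \<Rightarrow> bool" where
  "qpsd M \<longleftrightarrow> (\<forall>x::complex^'n. \<exists>r::real. r \<ge> 0 \<and>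
      (\<Sum>i\<in>UNIV. cnj (x $ i) * (M *v x) $ i) = complex_of_real r)"

definition qsqrt :: "'n::finite op \<Rightarrow> 'n op" where
  "qsqrt M = (THE S. qpsd S \<and> S ** S = M)"

definition ptrace1 :: "('a::finite \<times> 'b::finite) op \<Rightarrow> 'b op" where
  "ptrace1 M = (\<chi> j j'. \<Sum>i\<in>UNIV. M $ (i, j) $ (i, j'))"

definition ptrace2 :: "('a::finite \<times> 'b::finite) op \<Rightarrow> 'a op" where
  "ptrace2 M = (\<chi> i i'. \<Sum>j\<in>UNIV. M $ (i, j) $ (i', j))"

definition ketbra :: "'n::finite \<Rightarrow> 'n \<Rightarrow> 'n op" where
  "ketbra i j = (\<chi> k l. if k = i \<and> l = j then 1 else 0)"

definition unitary_channel :: "'n::finite op \<Rightarrow> 'n op \<Rightarrow> 'n op" where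
  "unitary_channel U \<rho> = U ** \<rho> ** qadj U"

text \<open>Choi state of a bipartite channel N from A'B' to AB, on systems R_A A R_B B
  (index ((r_A, a), (r_B, b))), with R_A \<simeq> A', R_B \<simeq> B':
  (id_{R_A R_B} \<otimes> N)(\<Phi>_{R_A A'} \<otimes> \<Phi>_{R_B B'}), where
  \<Phi>_{RX} = 1/|X| \<Sum>_{i,j} |ii><jj|.  Written out:
  1/(|A'||B'|) \<Sum>_{i,i',j,j'} |i j><i' j'|_{R_A R_B} \<otimes> N(|i j><i' j'|_{A'B'}),
  with the tensor factors reordered to R_A A R_B B.\<close>
definition choi_bip ::
  "(('ai::finite \<times> 'bi::finite) op \<Rightarrow> ('ao::finite \<times> 'bo::finite) op)
     \<Rightarrow> (('ai \<times> 'ao) \<times> ('bi \<times> 'bo)) op" where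
  "choi_bip N = (\<chi> p q.
      (1 / (of_nat CARD('ai) * of_nat CARD('bi))) *
      N (ketbra (fst (fst p), fst (snd p)) (fst (fst q), fst (snd q)))
        $ (snd (fst p), snd (snd p)) $ (snd (fst q), snd (snd q)))"

end

theory Submission
  imports Defs
begin

text \<open>Unitarity of U makes both marginals of \<Phi>^U_{R_B B} equal to 1/2.  For two qubits, an
  operator has both marginals proportional to the identity exactly when it is fixed by the spin
  flip M \<mapsto> Y M^T Y with Y = \<sigma>_y \<otimes> \<sigma>_y, which reverses products and preserves
  positivity.  Hence the spin flip of the positive square root of \<Phi>^U_{R_B B} is again a positive
  square root of it, and by uniqueness of positive square roots the square root is itself fixed, so
  its marginals are (tr \<surd>\<Phi>^U_{R_B B} / 2) \<one>.  Existence and uniqueness of positive square roots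
  come from the spectral theorem for Hermitian matrices, obtained by maximising the quadratic form
  on the unit sphere of an invariant subspace.\<close>

definition cinner :: "complex^'n::finite \<Rightarrow> complex^'n \<Rightarrow> complex" where
  "cinner x y = (\<Sum>i\<in>UNIV. cnj (x $ i) * y $ i)"

lemma cinner_add_left: "cinner (x + y) z = cinner x z + cinner y z"
  by (simp add: cinner_def distrib_right sum.distrib)

lemma cinner_add_right: "cinner x (y + z) = cinner x y + cinner x z"
  by (simp add: cinner_def distrib_left sum.distrib)

lemma cinner_diff_right: "cinner x (y - z) = cinner x y - cinner x z"
  by (simp add: cinner_def right_diff_distrib sum_subtractf)

lemma cinner_scale_left: "cinner (c *s x) y = cnj c * cinner x y"
  by (simp add: cinner_def sum_distrib_left mult_ac)

lemma cinner_scale_right: "cinner x (c *s y) = c * cinner x y"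
  by (simp add: cinner_def sum_distrib_left mult_ac)

lemma cinner_zero_right [simp]: "cinner x 0 = 0"
  by (simp add: cinner_def)

lemma cinner_sum_right: "cinner x (\<Sum>b\<in>B. f b) = (\<Sum>b\<in>B. cinner x (f b))"
  by (simp add: cinner_def sum_distrib_left sum.swap[of _ UNIV B])

lemma cinner_commute: "cinner y x = cnj (cinner x y)"
  by (simp add: cinner_def mult.commute)

lemma cinner_self: "cinner x x = of_real ((norm x)\<^sup>2)"
proof -
  have "(norm x)\<^sup>2 = (\<Sum>i\<in>UNIV. (cmod (x $ i))\<^sup>2)"
    by (simp add: norm_vec_def L2_set_def sum_nonneg)
  moreover have "cnj z * z = of_real ((cmod z)\<^sup>2)" for z
    by (simp only: complex_norm_square mult.commute)
  ultimately show ?thesis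
    by (simp add: cinner_def)
qed

lemma cinner_self_eq_0 [simp]: "cinner x x = 0 \<longleftrightarrow> x = 0"
  by (simp add: cinner_self)

lemma cinner_self_eq_1: "cinner x x = 1 \<longleftrightarrow> norm x = 1"
proof -
  have "cinner x x = 1 \<longleftrightarrow> (norm x)\<^sup>2 = 1"
    unfolding cinner_self of_real_eq_1_iff ..
  then show ?thesis
    using norm_ge_zero[of x] by (auto simp: power2_eq_1_iff)
qed

lemma cinner_axis_left: "cinner (axis p 1) y = y $ p"
proof -
  have "cinner (axis p 1) y = (\<Sum>i\<in>UNIV. if i = p then y $ i else 0)"
    unfolding cinner_def axis_def vec_lambda_beta by (rule sum.cong) auto
  then show ?thesis
    by simp
qed

lemma matrix_vector_mult_axis: "(A *v axis p 1) $ i = A $ i $ p"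
proof -
  have "(A *v axis p 1) $ i = (\<Sum>j\<in>UNIV. if j = p then A $ i $ j else 0)"
    unfolding matrix_vector_mult_def axis_def vec_lambda_beta by (rule sum.cong) auto
  then show ?thesis
    by simp
qed

lemma inner_eq_Re_cinner: "inner x y = Re (cinner x y)"
  by (simp add: inner_vec_def cinner_def inner_complex_def)

lemma cinner_adjoint: "cinner x (A *v y) = cinner (qadj A *v x) y"
proof -
  have "cinner x (A *v y) = (\<Sum>i\<in>UNIV. \<Sum>j\<in>UNIV. cnj (x $ i) * A $ i $ j * y $ j)"
    by (simp add: cinner_def matrix_vector_mult_def sum_distrib_left mult.assoc)
  also have "\<dots> = (\<Sum>j\<in>UNIV. \<Sum>i\<in>UNIV. cnj (x $ i) * A $ i $ j * y $ j)"
    by (rule sum.swap)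
  also have "\<dots> = cinner (qadj A *v x) y"
    by (simp add: cinner_def matrix_vector_mult_def qadj_def sum_distrib_right sum_distrib_left
        mult.commute mult.left_commute)
  finally show ?thesis .
qed

lemma qadj_qadj [simp]: "qadj (qadj A) = A"
  by (simp add: qadj_def vec_eq_iff)

definition hermitian :: "'n::finite op \<Rightarrow> bool" where
  "hermitian A \<longleftrightarrow> qadj A = A"

lemma hermitian_cinner: "hermitian A \<Longrightarrow> cinner x (A *v y) = cinner (A *v x) y"
  by (metis cinner_adjoint hermitian_def)

lemma quadratic_form_eq_0_imp_eq_0:
  fixes D :: "'n::finite op"
  assumes "\<And>x. cinner x (D *v x) = 0"
  shows "D = 0"
proof -
  have polar: "cinner x (D *v y) = 0" for x y
  proof -
    have "cinner x (D *v y) + cinner y (D *v x) = 0"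
      using assms[of "x + y"] assms[of x] assms[of y]
      by (simp add: cinner_add_left cinner_add_right matrix_vector_right_distrib add.commute)
    moreover have "cinner x (D *v y) - cinner y (D *v x) = 0"
      using assms[of "x + \<i> *s y"] assms[of x] assms[of y]
      by (simp add: cinner_add_left cinner_add_right matrix_vector_right_distrib cinner_scale_left
          cinner_scale_right vector_scalar_commute algebra_simps)
    ultimately show ?thesis
      by (simp add: algebra_simps)
  qed
  show ?thesis
    by (metis matrix_eq matrix_vector_mult_0 polar cinner_self_eq_0)
qed

lemma qpsd_iff_cinner: "qpsd M \<longleftrightarrow> (\<forall>x. \<exists>r\<ge>0. cinner x (M *v x) = of_real r)"
  by (simp add: qpsd_def cinner_def)

lemma qpsd_cinner_real: "qpsd M \<Longrightarrow> cinner x (M *v x) = of_real (Re (cinner x (M *v x)))"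
  by (metis Re_complex_of_real qpsd_iff_cinner)

lemma qpsd_cinner_nonneg: "qpsd M \<Longrightarrow> 0 \<le> Re (cinner x (M *v x))"
  by (metis Re_complex_of_real qpsd_iff_cinner)

lemma qpsd_hermitian:
  assumes "qpsd M"
  shows "hermitian M"
proof -
  have "cinner x ((M - qadj M) *v x) = 0" for x
  proof -
    have "cinner x (qadj M *v x) = cnj (cinner x (M *v x))"
      by (metis cinner_adjoint cinner_commute qadj_qadj)
    also have "\<dots> = cinner x (M *v x)"
      using qpsd_cinner_real[OF assms, of x] by (metis complex_cnj_complex_of_real)
    finally show ?thesis
      by (simp add: matrix_vector_mult_diff_rdistrib cinner_diff_right)
  qed
  then have "M - qadj M = 0"
    by (rule quadratic_form_eq_0_imp_eq_0)
  then show ?thesis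
    by (simp add: hermitian_def)
qed

lemma nonneg_quadratic_imp_linear_coeff_0:
  fixes a b :: real
  assumes nonneg: "\<And>t. 0 \<le> 2 * t * b + t\<^sup>2 * a"
  shows "b = 0"
proof -
  have "0 \<le> a"
    using nonneg[of 1] nonneg[of "-1"] by simp
  define t where "t = - b / (a + 1)"
  have t: "t * (a + 1) = - b"
    using \<open>0 \<le> a\<close> by (simp add: t_def)
  have "0 \<le> (2 * t * b + t\<^sup>2 * a) * (a + 1)\<^sup>2"
    using nonneg[of t] by simp
  also have "\<dots> = 2 * b * (t * (a + 1)) * (a + 1) + (t * (a + 1))\<^sup>2 * a"
    by (simp add: algebra_simps power2_eq_square)
  also have "\<dots> = - b\<^sup>2 * (a + 2)"
    unfolding t by (simp add: power2_eq_square algebra_simps)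
  finally show ?thesis
    using \<open>0 \<le> a\<close> by (simp add: mult_le_0_iff)
qed

text \<open>A root of a form that is nonnegative on W is a minimum on W, so the first variation of
  the form vanishes there.\<close>

lemma nonneg_hermitian_form_root_orthogonal:
  fixes A :: "'n::finite op"
  assumes "hermitian A" and "vec.subspace W"
    and nonneg: "\<And>x. x \<in> W \<Longrightarrow> 0 \<le> Re (cinner x (A *v x))"
    and "v \<in> W" and root: "Re (cinner v (A *v v)) = 0" and "w \<in> W"
  shows "cinner w (A *v v) = 0"
proof -
  have Re_0: "Re (cinner u (A *v v)) = 0" if "u \<in> W" for u
  proof (rule nonneg_quadratic_imp_linear_coeff_0)
    fix t :: real
    have "cinner v (A *v u) = cnj (cinner u (A *v v))"
      by (metis \<open>hermitian A\<close> cinner_commute hermitian_cinner)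
    then have "Re (cinner (v + of_real t *s u) (A *v (v + of_real t *s u)))
        = 2 * t * Re (cinner u (A *v v)) + t\<^sup>2 * Re (cinner u (A *v u))"
      using root by (simp add: cinner_add_left cinner_add_right matrix_vector_right_distrib
          cinner_scale_left cinner_scale_right vector_scalar_commute power2_eq_square algebra_simps)
    moreover have "v + of_real t *s u \<in> W"
      using assms(2) \<open>v \<in> W\<close> that by (simp add: vec.subspace_add vec.subspace_scale)
    ultimately show "0 \<le> 2 * t * Re (cinner u (A *v v)) + t\<^sup>2 * Re (cinner u (A *v u))"
      using nonneg by metis
  qed
  have "Re (cinner (\<i> *s w) (A *v v)) = 0"
    using Re_0 assms(2) \<open>w \<in> W\<close> by (simp add: vec.subspace_scale)
  then show ?thesis
    using Re_0[OF \<open>w \<in> W\<close>] by (simp add: cinner_scale_left complex_eq_iff)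
qed

lemma qpsd_cinner_eq_0_imp_mult_vec_eq_0:
  assumes "qpsd M" and "cinner x (M *v x) = 0"
  shows "M *v x = 0"
proof -
  have "cinner (M *v x) (M *v x) = 0"
    using assms qpsd_cinner_nonneg
    by (intro nonneg_hermitian_form_root_orthogonal[OF qpsd_hermitian vec.subspace_UNIV]) auto
  then show ?thesis
    by simp
qed

lemma qpsd_trace_eq_0_imp_eq_0:
  assumes "qpsd S" and "qtrace S = 0"
  shows "S = 0"
proof -
  have diag: "S $ p $ p = of_real (Re (S $ p $ p))" "0 \<le> Re (S $ p $ p)" for p
    using qpsd_cinner_real[OF assms(1), of "axis p 1"] qpsd_cinner_nonneg[OF assms(1), of "axis p 1"]
    by (simp_all add: cinner_axis_left matrix_vector_mult_axis)
  have "(\<Sum>p\<in>UNIV. Re (S $ p $ p)) = Re (qtrace S)"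
    by (simp add: qtrace_def)
  then have "Re (S $ p $ p) = 0" for p
    using assms(2) diag(2) by (simp add: sum_nonneg_eq_0_iff)
  then have "S *v axis p 1 = 0" for p
    using diag(1) qpsd_cinner_eq_0_imp_mult_vec_eq_0[OF assms(1)]
    by (metis cinner_axis_left matrix_vector_mult_axis of_real_0)
  then show ?thesis
    by (simp add: vec_eq_iff matrix_vector_mult_axis[symmetric])
qed

lemma of_real_scale_eq_scaleR: "of_real r *s x = r *\<^sub>R (x::complex^'n)"
  by (simp add: vec_eq_iff scaleR_vec_def scaleR_conv_of_real)

lemma matrix_vector_mult_sum: "A *v (\<Sum>b\<in>B. f b) = (\<Sum>b\<in>B. A *v f b)"
  by (simp add: vec_eq_iff matrix_vector_mult_def sum_distrib_left sum.swap[of _ UNIV B])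

lemma mat_vector_mult: "mat c *v x = c *s (x::'a::comm_semiring_1^'n::finite)"
proof -
  have "(\<Sum>j\<in>UNIV. (if i = j then c else 0) * x $ j) = c * x $ i" for i
  proof -
    have "(\<Sum>j\<in>UNIV. (if i = j then c else 0) * x $ j) = (\<Sum>j\<in>UNIV. if i = j then c * x $ j else 0)"
      by (rule sum.cong) auto
    then show ?thesis
      by simp
  qed
  then show ?thesis
    by (simp add: vec_eq_iff matrix_vector_mult_def mat_def)
qed

lemma vec_subspace_imp_closed:
  fixes W :: "(complex^'n::finite) set"
  assumes "vec.subspace W"
  shows "closed W"
proof (rule closed_subspace)
  show "subspace W"
    using assms unfolding subspace_def vec.subspace_def
    by (metis of_real_scale_eq_scaleR)
qed

definition orthonormal_set :: "(complex^'n::finite) set \<Rightarrow> bool" where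
  "orthonormal_set B \<longleftrightarrow>
     finite B \<and> (\<forall>b\<in>B. cinner b b = 1) \<and> (\<forall>b\<in>B. \<forall>c\<in>B. b \<noteq> c \<longrightarrow> cinner b c = 0)"

definition orthonormal_basis :: "(complex^'n::finite) set \<Rightarrow> bool" where
  "orthonormal_basis B \<longleftrightarrow> orthonormal_set B \<and> (\<forall>x. (\<forall>b\<in>B. cinner b x = 0) \<longrightarrow> x = 0)"

lemma orthonormal_set_nonzero: "orthonormal_set B \<Longrightarrow> b \<in> B \<Longrightarrow> b \<noteq> 0"
  by (auto simp: orthonormal_set_def)

lemma orthonormal_set_card:
  fixes B :: "(complex^'n::finite) set"
  assumes "orthonormal_set B"
  shows "card B \<le> DIM(complex^'n)"
proof -
  have "pairwise orthogonal B"
    using assms by (simp add: orthonormal_set_def pairwise_def orthogonal_def inner_eq_Re_cinner)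
  moreover have "0 \<notin> B"
    using assms orthonormal_set_nonzero by blast
  ultimately show ?thesis
    using independent_bound pairwise_orthogonal_independent by blast
qed

lemma orthonormal_set_cinner:
  assumes "orthonormal_set B" and "b \<in> B" and "c \<in> B"
  shows "cinner b c = (if b = c then 1 else 0)"
  using assms by (auto simp: orthonormal_set_def)

lemma orthonormal_basis_expansion:
  assumes "orthonormal_basis B"
  shows "x = (\<Sum>b\<in>B. cinner b x *s b)"
proof -
  have fin: "finite B" and B: "orthonormal_set B"
    using assms by (simp_all add: orthonormal_basis_def orthonormal_set_def)
  have "cinner c (x - (\<Sum>b\<in>B. cinner b x *s b)) = 0" if "c \<in> B" for c
  proof -
    have "cinner c (\<Sum>b\<in>B. cinner b x *s b) = (\<Sum>b\<in>B. if c = b then cinner b x else 0)"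
      using orthonormal_set_cinner[OF B that]
      by (auto simp: cinner_sum_right cinner_scale_right intro: sum.cong)
    also have "\<dots> = cinner c x"
      using fin that by simp
    finally show ?thesis
      by (simp add: cinner_diff_right)
  qed
  then have "x - (\<Sum>b\<in>B. cinner b x *s b) = 0"
    using assms unfolding orthonormal_basis_def by blast
  then show ?thesis
    by simp
qed

lemma orthonormal_basis_matrix_eq:
  assumes "orthonormal_basis B" and "\<And>b. b \<in> B \<Longrightarrow> S *v b = T *v b"
  shows "S = T"
proof (rule iffD2[OF matrix_eq], rule allI)
  fix x
  have "S *v x = (\<Sum>b\<in>B. cinner b x *s (S *v b))"
    by (subst orthonormal_basis_expansion[OF assms(1)])
      (simp add: matrix_vector_mult_sum vector_scalar_commute)
  also have "\<dots> = (\<Sum>b\<in>B. cinner b x *s (T *v b))"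
    using assms(2) by simp
  also have "\<dots> = T *v x"
    by (subst (2) orthonormal_basis_expansion[OF assms(1)])
      (simp add: matrix_vector_mult_sum vector_scalar_commute)
  finally show "S *v x = T *v x" .
qed

lemma quadratic_form_max_on_subspace:
  fixes H :: "'n::finite op"
  assumes W: "vec.subspace W" and "x0 \<in> W" and "x0 \<noteq> 0"
  shows "\<exists>v\<in>W. norm v = 1 \<and>
    (\<forall>x\<in>W. Re (cinner x (H *v x)) \<le> Re (cinner v (H *v v)) * (norm x)\<^sup>2)"
proof -
  define f where "f x = Re (cinner x (H *v x))" for x
  define S where "S = sphere 0 1 \<inter> W"
  have scaled: "r *\<^sub>R x \<in> W" if "x \<in> W" for r x
    using vec.subspace_scale[OF W that, of "of_real r"] by (simp add: of_real_scale_eq_scaleR)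
  have f_scaled: "f (r *\<^sub>R x) = r\<^sup>2 * f x" for r x
    by (simp add: f_def flip: of_real_scale_eq_scaleR)
      (simp add: cinner_scale_left cinner_scale_right vector_scalar_commute power2_eq_square)
  have "compact S"
    unfolding S_def using vec_subspace_imp_closed[OF W] by (intro compact_Int_closed) auto
  moreover have "continuous_on S f"
    unfolding f_def cinner_def matrix_vector_mult_def
    by (intro continuous_intros linear_continuous_on bounded_linear_vec_nth)
  moreover have "(1 / norm x0) *\<^sub>R x0 \<in> S"
    using \<open>x0 \<in> W\<close> \<open>x0 \<noteq> 0\<close> scaled by (simp add: S_def)
  ultimately obtain v where "v \<in> S" and v_max: "\<And>y. y \<in> S \<Longrightarrow> f y \<le> f v"
    using continuous_attains_sup[of S f] by blast
  have "f x \<le> f v * (norm x)\<^sup>2" if "x \<in> W" for x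
  proof (cases "x = 0")
    case False
    have "(1 / norm x) *\<^sub>R x \<in> S"
      using False that scaled by (simp add: S_def)
    then have "f x / (norm x)\<^sup>2 \<le> f v"
      using v_max[of "(1 / norm x) *\<^sub>R x"] f_scaled[of "1 / norm x" x] by (simp add: power_divide)
    then show ?thesis
      using False by (simp add: divide_le_eq mult.commute)
  qed (simp add: f_def)
  with \<open>v \<in> S\<close> show ?thesis
    by (auto simp: S_def f_def)
qed

text \<open>The maximiser of the Rayleigh quotient on W is an eigenvector.\<close>

lemma hermitian_eigenvector_in_invariant_subspace:
  fixes H :: "'n::finite op"
  assumes "hermitian H" and W: "vec.subspace W" and invariant: "\<And>x. x \<in> W \<Longrightarrow> H *v x \<in> W"
    and "x0 \<in> W" and "x0 \<noteq> 0"
  shows "\<exists>v\<in>W. norm v = 1 \<and> (\<exists>\<mu>. H *v v = of_real \<mu> *s v)"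
proof -
  obtain v where "v \<in> W" and "norm v = 1"
    and v_max: "\<And>x. x \<in> W \<Longrightarrow> Re (cinner x (H *v x)) \<le> Re (cinner v (H *v v)) * (norm x)\<^sup>2"
    using quadratic_form_max_on_subspace[OF W \<open>x0 \<in> W\<close> \<open>x0 \<noteq> 0\<close>] by blast
  define \<mu> where "\<mu> = Re (cinner v (H *v v))"
  define A where "A = mat (of_real \<mu>) - H"
  have A_apply: "A *v x = of_real \<mu> *s x - H *v x" for x
    by (simp add: A_def matrix_vector_mult_diff_rdistrib mat_vector_mult)
  have A_form: "Re (cinner x (A *v x)) = \<mu> * (norm x)\<^sup>2 - Re (cinner x (H *v x))" for x
    by (simp add: A_apply cinner_diff_right cinner_scale_right cinner_self)
  have "hermitian A"
    using \<open>hermitian H\<close> by (simp add: hermitian_def A_def qadj_def mat_def vec_eq_iff)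
  then have "cinner (A *v v) (A *v v) = 0"
  proof (rule nonneg_hermitian_form_root_orthogonal[OF _ W])
    show "0 \<le> Re (cinner x (A *v x))" if "x \<in> W" for x
      using v_max[OF that] by (simp add: A_form \<mu>_def)
    show "Re (cinner v (A *v v)) = 0"
      using \<open>norm v = 1\<close> by (simp add: A_form \<mu>_def)
    show "A *v v \<in> W"
      using \<open>v \<in> W\<close> invariant W by (simp add: A_apply vec.subspace_diff vec.subspace_scale)
  qed (use \<open>v \<in> W\<close> in simp)
  then have "H *v v = of_real \<mu> *s v"
    by (simp add: A_apply)
  then show ?thesis
    using \<open>v \<in> W\<close> \<open>norm v = 1\<close> by blast
qed

lemma orthonormal_eigenvectors_extend:
  fixes H :: "'n::finite op"
  assumes "hermitian H" and "orthonormal_set B" and B_eigen: "\<forall>b\<in>B. \<exists>\<mu>. H *v b = of_real \<mu> *s b"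
    and "x \<noteq> 0" and x_orth: "\<forall>b\<in>B. cinner b x = 0"
  shows "\<exists>v. v \<notin> B \<and> orthonormal_set (insert v B) \<and> (\<exists>\<mu>. H *v v = of_real \<mu> *s v)"
proof -
  define W where "W = {y. \<forall>b\<in>B. cinner b y = 0}"
  have W: "vec.subspace W"
    by (simp add: W_def vec.subspace_def cinner_add_right cinner_scale_right)
  have invariant: "H *v y \<in> W" if "y \<in> W" for y
  proof -
    have "cinner b (H *v y) = 0" if "b \<in> B" for b
    proof -
      obtain \<mu> where "H *v b = of_real \<mu> *s b"
        using B_eigen \<open>b \<in> B\<close> by blast
      then show ?thesis
        using \<open>y \<in> W\<close> \<open>b \<in> B\<close> by (simp add: hermitian_cinner[OF assms(1)] cinner_scale_left W_def)
    qed
    then show ?thesis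
      by (simp add: W_def)
  qed
  have "x \<in> W"
    using x_orth by (simp add: W_def)
  then obtain v where "v \<in> W" "norm v = 1" and v_eigen: "\<exists>\<mu>. H *v v = of_real \<mu> *s v"
    using hermitian_eigenvector_in_invariant_subspace[OF assms(1) W invariant _ \<open>x \<noteq> 0\<close>] by blast
  have "cinner b v = 0" and "cinner v b = 0" if "b \<in> B" for b
    using \<open>v \<in> W\<close> that cinner_commute[of v b] by (simp_all add: W_def)
  then have "orthonormal_set (insert v B)"
    using \<open>orthonormal_set B\<close> \<open>norm v = 1\<close> by (auto simp: orthonormal_set_def cinner_self_eq_1)
  moreover have "v \<notin> B"
    using \<open>v \<in> W\<close> \<open>norm v = 1\<close> by (auto simp: W_def cinner_self_eq_1[symmetric])
  ultimately show ?thesis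
    using v_eigen by blast
qed

theorem hermitian_orthonormal_eigenbasis:
  fixes H :: "'n::finite op"
  assumes "hermitian H"
  shows "\<exists>B. orthonormal_basis B \<and> (\<forall>b\<in>B. \<exists>\<mu>. H *v b = of_real \<mu> *s b)"
proof -
  define P where "P B \<longleftrightarrow> orthonormal_set B \<and> (\<forall>b\<in>B. \<exists>\<mu>. H *v b = of_real \<mu> *s b)"
    for B :: "(complex^'n) set"
  have "P {}"
    by (simp add: P_def orthonormal_set_def)
  moreover have "card B < DIM(complex^'n) + 1" if "P B" for B
    using that orthonormal_set_card by (fastforce simp: P_def)
  ultimately obtain B where "P B" and B_max: "\<And>C. P C \<Longrightarrow> card C \<le> card B"
    using ex_has_greatest_nat[of P "{}" card] by metis
  have "x = 0" if x_orth: "\<forall>b\<in>B. cinner b x = 0" for x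
  proof (rule ccontr)
    assume "x \<noteq> 0"
    then obtain v where "v \<notin> B" and "P (insert v B)"
      using orthonormal_eigenvectors_extend[OF assms _ _ _ x_orth] \<open>P B\<close> by (auto simp: P_def)
    then show False
      using B_max[of "insert v B"] \<open>P B\<close> by (simp add: P_def orthonormal_set_def)
  qed
  then show ?thesis
    using \<open>P B\<close> by (auto simp: P_def orthonormal_basis_def)
qed

lemma outer_product_sum_mult_vec:
  "(\<chi> i j. \<Sum>k\<in>K. f k * w k $ i * cnj (w k $ j)) *v x = (\<Sum>k\<in>K. (f k * cinner (w k) x) *s w k)"
proof -
  have "(\<Sum>j\<in>UNIV. (\<Sum>k\<in>K. f k * w k $ i * cnj (w k $ j)) * x $ j)
      = (\<Sum>k\<in>K. f k * (\<Sum>j\<in>UNIV. cnj (w k $ j) * x $ j) * w k $ i)" for i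
    by (simp add: sum_distrib_left sum_distrib_right sum.swap[of _ K UNIV] mult_ac)
  then show ?thesis
    by (simp add: vec_eq_iff matrix_vector_mult_def cinner_def sum_component)
qed

lemma qpsd_outer_product_sum:
  assumes "\<And>k. k \<in> K \<Longrightarrow> 0 \<le> f k"
  shows "qpsd (\<chi> i j. \<Sum>k\<in>K. of_real (f k) * w k $ i * cnj (w k $ j))"
  unfolding qpsd_iff_cinner
proof
  fix x
  have "cinner x ((\<chi> i j. \<Sum>k\<in>K. of_real (f k) * w k $ i * cnj (w k $ j)) *v x)
      = (\<Sum>k\<in>K. of_real (f k) * (cinner (w k) x * cnj (cinner (w k) x)))"
    unfolding outer_product_sum_mult_vec
    by (simp add: cinner_sum_right cinner_scale_right cinner_commute[of x "w _"] mult_ac)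
  also have "\<dots> = of_real (\<Sum>k\<in>K. f k * (cmod (cinner (w k) x))\<^sup>2)"
    by (simp flip: complex_norm_square)
  finally have "cinner x ((\<chi> i j. \<Sum>k\<in>K. of_real (f k) * w k $ i * cnj (w k $ j)) *v x)
      = of_real (\<Sum>k\<in>K. f k * (cmod (cinner (w k) x))\<^sup>2)" .
  moreover have "0 \<le> (\<Sum>k\<in>K. f k * (cmod (cinner (w k) x))\<^sup>2)"
    using assms by (simp add: sum_nonneg)
  ultimately show "\<exists>r\<ge>0. cinner x ((\<chi> i j. \<Sum>k\<in>K. of_real (f k) * w k $ i * cnj (w k $ j)) *v x)
      = of_real r"
    by blast
qed

lemma qpsd_eigenvalue_nonneg:
  assumes "qpsd M" and "M *v b = of_real \<mu> *s b" and "b \<noteq> 0"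
  shows "0 \<le> \<mu>"
proof -
  have "0 \<le> Re (cinner b (M *v b))"
    using assms(1) by (rule qpsd_cinner_nonneg)
  also have "\<dots> = \<mu> * (norm b)\<^sup>2"
    by (simp add: assms(2) cinner_scale_right cinner_self)
  finally show ?thesis
    using assms(3) by (simp add: zero_le_mult_iff)
qed

lemma qpsd_sqrt_on_eigenvector:
  assumes "qpsd T" and TT: "(T ** T) *v b = of_real \<mu> *s b" and "0 \<le> \<mu>"
  shows "T *v b = of_real (sqrt \<mu>) *s b"
proof (cases "\<mu> = 0")
  case True
  have "cinner (T *v b) (T *v b) = cinner b ((T ** T) *v b)"
    by (simp add: hermitian_cinner[OF qpsd_hermitian[OF assms(1)]] flip: matrix_vector_mul_assoc)
  then show ?thesis
    using True TT by simp
next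
  case False
  define s where "s = sqrt \<mu>"
  have "s > 0" and s_sq: "of_real s * of_real s = (of_real \<mu> :: complex)"
    using False \<open>0 \<le> \<mu>\<close> by (simp_all add: s_def flip: of_real_mult)
  define u where "u = T *v b - of_real s *s b"
  \<comment> \<open>(T + s)(T - s) b = (T^2 - s^2) b = 0, and T + s is positive definite.\<close>
  have "T *v u + of_real s *s u = (T ** T) *v b - (of_real s * of_real s) *s b"
    by (simp add: u_def matrix_vector_mult_diff_distrib vector_scalar_commute vector_ssub_ldistrib
        vector_smult_assoc flip: matrix_vector_mul_assoc)
  then have "T *v u + of_real s *s u = 0"
    by (simp add: TT s_sq)
  then have "cinner u (T *v u) + of_real s * cinner u u = 0"
    by (metis cinner_add_right cinner_scale_right cinner_zero_right)
  then have "Re (cinner u (T *v u) + of_real s * cinner u u) = 0"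
    by simp
  then have "Re (cinner u (T *v u)) + s * (norm u)\<^sup>2 = 0"
    by (simp add: cinner_self flip: of_real_power of_real_mult)
  moreover have "0 \<le> s * (norm u)\<^sup>2"
    using \<open>s > 0\<close> by simp
  ultimately have "s * (norm u)\<^sup>2 = 0"
    using qpsd_cinner_nonneg[OF assms(1), of u] by linarith
  then show ?thesis
    using \<open>s > 0\<close> by (simp add: u_def s_def)
qed

lemma outer_product_sum_on_orthonormal:
  assumes "orthonormal_set B" and "c \<in> B"
  shows "(\<chi> i j. \<Sum>b\<in>B. f b * b $ i * cnj (b $ j)) *v c = f c *s c"
proof -
  have "(\<Sum>b\<in>B. (f b * cinner b c) *s b) = (\<Sum>b\<in>B. if b = c then f c *s c else 0)"
    using orthonormal_set_cinner[OF assms(1) _ assms(2)] by (intro sum.cong) auto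
  then show ?thesis
    using assms by (simp add: outer_product_sum_mult_vec orthonormal_set_def)
qed

lemma qpsd_sqrt_exists:
  assumes "qpsd M"
  shows "\<exists>S. qpsd S \<and> S ** S = M"
proof -
  obtain B where B: "orthonormal_basis B" and "\<forall>b\<in>B. \<exists>\<mu>. M *v b = of_real \<mu> *s b"
    using hermitian_orthonormal_eigenbasis[OF qpsd_hermitian[OF assms]] by blast
  then obtain \<mu> where M_eigen: "\<And>b. b \<in> B \<Longrightarrow> M *v b = of_real (\<mu> b) *s b"
    by metis
  have B_ortho: "orthonormal_set B"
    using B by (simp add: orthonormal_basis_def)
  have \<mu>_nonneg: "0 \<le> \<mu> b" if "b \<in> B" for b
    using qpsd_eigenvalue_nonneg[OF assms M_eigen[OF that]] orthonormal_set_nonzero[OF B_ortho that]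
    by blast
  define S where "S = (\<chi> i j. \<Sum>b\<in>B. of_real (sqrt (\<mu> b)) * b $ i * cnj (b $ j))"
  have "qpsd S"
    unfolding S_def by (rule qpsd_outer_product_sum) (simp add: \<mu>_nonneg)
  moreover have "S ** S = M"
  proof (rule orthonormal_basis_matrix_eq[OF B])
    fix b
    assume "b \<in> B"
    then have "S *v b = of_real (sqrt (\<mu> b)) *s b"
      unfolding S_def by (rule outer_product_sum_on_orthonormal[OF B_ortho])
    then show "(S ** S) *v b = M *v b"
      using \<mu>_nonneg[OF \<open>b \<in> B\<close>]
      by (simp add: M_eigen[OF \<open>b \<in> B\<close>] matrix_vector_mul_assoc[symmetric] vector_scalar_commute
          vector_smult_assoc flip: of_real_mult)
  qed
  ultimately show ?thesis
    by blast
qed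

lemma qpsd_sqrt_unique:
  assumes "qpsd S" and "qpsd T" and "S ** S = T ** T"
  shows "S = T"
proof -
  obtain B where B: "orthonormal_basis B" and S_eigen: "\<forall>b\<in>B. \<exists>\<mu>. S *v b = of_real \<mu> *s b"
    using hermitian_orthonormal_eigenbasis[OF qpsd_hermitian[OF assms(1)]] by blast
  show ?thesis
  proof (rule orthonormal_basis_matrix_eq[OF B])
    fix b
    assume "b \<in> B"
    then obtain \<mu> where S_b: "S *v b = of_real \<mu> *s b"
      using S_eigen by blast
    have "0 \<le> \<mu>"
      using qpsd_eigenvalue_nonneg[OF assms(1) S_b] orthonormal_set_nonzero \<open>b \<in> B\<close> B
      by (auto simp: orthonormal_basis_def)
    have "(T ** T) *v b = of_real (\<mu>\<^sup>2) *s b"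
      by (simp flip: assms(3) matrix_vector_mul_assoc add: S_b vector_scalar_commute
          vector_smult_assoc power2_eq_square)
    then have "T *v b = of_real \<mu> *s b"
      using qpsd_sqrt_on_eigenvector[OF assms(2)] \<open>0 \<le> \<mu>\<close> by fastforce
    then show "S *v b = T *v b"
      by (simp add: S_b)
  qed
qed

lemma
  assumes "qpsd M"
  shows qpsd_qsqrt: "qpsd (qsqrt M)" and qsqrt_square: "qsqrt M ** qsqrt M = M"
proof -
  have "\<exists>!S. qpsd S \<and> S ** S = M"
    using qpsd_sqrt_exists[OF assms] qpsd_sqrt_unique by blast
  then have "qpsd (qsqrt M) \<and> qsqrt M ** qsqrt M = M"
    unfolding qsqrt_def by (rule theI')
  then show "qpsd (qsqrt M)" and "qsqrt M ** qsqrt M = M"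
    by blast+
qed

lemma qsqrt_unique:
  assumes "qpsd M" and "qpsd T" and "T ** T = M"
  shows "qsqrt M = T"
  using qpsd_sqrt_unique qpsd_qsqrt qsqrt_square assms by metis

lemma unitary_channel_ketbra:
  "unitary_channel U (ketbra k l) $ x $ y = U $ x $ k * cnj (U $ y $ l)"
proof -
  have UK: "(U ** ketbra k l) $ x $ m = (if m = l then U $ x $ k else 0)" for m
  proof -
    have "(U ** ketbra k l) $ x $ m = (\<Sum>n\<in>UNIV. if n = k then (if m = l then U $ x $ k else 0) else 0)"
      unfolding matrix_matrix_mult_def ketbra_def vec_lambda_beta by (rule sum.cong) auto
    then show ?thesis
      by simp
  qed
  have "unitary_channel U (ketbra k l) $ x $ y = (\<Sum>m\<in>UNIV. if m = l then U $ x $ k * cnj (U $ y $ l) else 0)"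
    unfolding unitary_channel_def matrix_matrix_mult_def[of "U ** ketbra k l"] vec_lambda_beta
    by (rule sum.cong) (auto simp: UK qadj_def)
  then show ?thesis
    by simp
qed

lemma ptrace1_choi_unitary_channel:
  fixes U :: "('a::finite \<times> 'b::finite) op"
  shows "ptrace1 (choi_bip (unitary_channel U))
    = (\<chi> i j. \<Sum>k\<in>UNIV. of_real (1 / (CARD('a) * CARD('b)))
        * (\<chi> p. U $ (snd k, snd p) $ (fst k, fst p)) $ i * cnj ((\<chi> p. U $ (snd k, snd p) $ (fst k, fst p)) $ j))"
  by (simp add: vec_eq_iff ptrace1_def choi_bip_def unitary_channel_ketbra)

lemma qpsd_ptrace1_choi_unitary_channel: "qpsd (ptrace1 (choi_bip (unitary_channel U)))"
  unfolding ptrace1_choi_unitary_channel by (rule qpsd_outer_product_sum) simp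

lemma qunitary_rows:
  assumes "qunitary U"
  shows "(\<Sum>x\<in>UNIV. U $ p $ x * cnj (U $ q $ x)) = (if p = q then 1 else 0)"
proof -
  have "(U ** qadj U) $ p $ q = mat 1 $ p $ q"
    using assms by (simp add: qunitary_def)
  then show ?thesis
    by (simp add: matrix_matrix_mult_def qadj_def mat_def)
qed

lemma qunitary_columns:
  assumes "qunitary U"
  shows "(\<Sum>x\<in>UNIV. U $ x $ p * cnj (U $ x $ q)) = (if p = q then 1 else 0)"
proof -
  have "(qadj U ** U) $ q $ p = mat 1 $ q $ p"
    using assms by (simp add: qunitary_def)
  then show ?thesis
    by (simp add: matrix_matrix_mult_def qadj_def mat_def mult.commute eq_commute)
qed

lemma sum_UNIV_prod: "(\<Sum>p\<in>UNIV. g p) = (\<Sum>x\<in>UNIV. \<Sum>y\<in>UNIV. g (x, y))"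
  by (simp add: sum.cartesian_product UNIV_Times_UNIV[symmetric] del: UNIV_Times_UNIV)

lemma sum_reverse3: "(\<Sum>x\<in>A. \<Sum>y\<in>B. \<Sum>z\<in>C. f x y z) = (\<Sum>z\<in>C. \<Sum>y\<in>B. \<Sum>x\<in>A. f x y z)"
proof -
  have "(\<Sum>x\<in>A. \<Sum>y\<in>B. \<Sum>z\<in>C. f x y z) = (\<Sum>x\<in>A. \<Sum>z\<in>C. \<Sum>y\<in>B. f x y z)"
    by (rule sum.cong[OF refl], rule sum.swap)
  also have "\<dots> = (\<Sum>z\<in>C. \<Sum>x\<in>A. \<Sum>y\<in>B. f x y z)"
    by (rule sum.swap)
  also have "\<dots> = (\<Sum>z\<in>C. \<Sum>y\<in>B. \<Sum>x\<in>A. f x y z)"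
    by (rule sum.cong[OF refl], rule sum.swap)
  finally show ?thesis .
qed

lemma choi_unitary_channel_marginals:
  fixes U :: "('a::finite \<times> 'b::finite) op"
  assumes U: "qunitary U"
  defines "\<Phi> \<equiv> ptrace1 (choi_bip (unitary_channel U))"
  shows "ptrace1 \<Phi> = mat (1 / CARD('b))" and "ptrace2 \<Phi> = mat (1 / CARD('b))"
proof -
  define c :: complex where "c = 1 / (of_nat CARD('a) * of_nat CARD('b))"
  have c: "c * of_nat CARD('a) = 1 / of_nat CARD('b)"
    by (simp add: c_def)
  have \<Phi>: "\<Phi> $ (rb, b) $ (rb', b')
      = (\<Sum>ra\<in>UNIV. \<Sum>a\<in>UNIV. c * U $ (a, b) $ (ra, rb) * cnj (U $ (a, b') $ (ra, rb')))"
    for rb b rb' b'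
    unfolding \<Phi>_def ptrace1_choi_unitary_channel vec_lambda_beta
    by (subst sum_UNIV_prod) (simp add: c_def)
  have "ptrace1 \<Phi> $ b $ b'
      = (\<Sum>rb\<in>UNIV. \<Sum>ra\<in>UNIV. \<Sum>a\<in>UNIV. c * U $ (a, b) $ (ra, rb) * cnj (U $ (a, b') $ (ra, rb)))"
    for b b'
    by (simp add: ptrace1_def \<Phi>)
  also have "\<dots> b b'
      = (\<Sum>a\<in>UNIV. \<Sum>ra\<in>UNIV. \<Sum>rb\<in>UNIV. c * U $ (a, b) $ (ra, rb) * cnj (U $ (a, b') $ (ra, rb)))"
    for b b'
    by (rule sum_reverse3)
  also have "\<dots> b b' = c * (\<Sum>a\<in>UNIV. \<Sum>x\<in>UNIV. U $ (a, b) $ x * cnj (U $ (a, b') $ x))" for b b'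
    by (simp add: sum_UNIV_prod sum_distrib_left mult.assoc)
  finally show "ptrace1 \<Phi> = mat (1 / CARD('b))"
    using c by (simp add: vec_eq_iff mat_def qunitary_rows[OF U])
  have "ptrace2 \<Phi> $ rb $ rb'
      = (\<Sum>b\<in>UNIV. \<Sum>ra\<in>UNIV. \<Sum>a\<in>UNIV. c * U $ (a, b) $ (ra, rb) * cnj (U $ (a, b) $ (ra, rb')))"
    for rb rb'
    by (simp add: ptrace2_def \<Phi>)
  also have "\<dots> rb rb'
      = (\<Sum>ra\<in>UNIV. \<Sum>a\<in>UNIV. \<Sum>b\<in>UNIV. c * U $ (a, b) $ (ra, rb) * cnj (U $ (a, b) $ (ra, rb')))"
    for rb rb'
    by (subst sum.swap, rule sum.cong[OF refl], rule sum.swap)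
  also have "\<dots> rb rb' = c * (\<Sum>ra\<in>UNIV. \<Sum>y\<in>UNIV. U $ y $ (ra, rb) * cnj (U $ y $ (ra, rb')))"
    for rb rb'
    by (simp add: sum_UNIV_prod sum_distrib_left mult.assoc)
  finally show "ptrace2 \<Phi> = mat (1 / CARD('b))"
    using c by (simp add: vec_eq_iff mat_def qunitary_columns[OF U])
qed

lemma sum_UNIV_2x2:
  fixes g :: "2 \<times> 2 \<Rightarrow> 'a::comm_monoid_add"
  shows "(\<Sum>p\<in>UNIV. g p) = g (1, 1) + g (1, 2) + g (2, 1) + g (2, 2)"
  by (simp add: sum_UNIV_prod sum_2 add.assoc)

lemma all_2x2: "(\<forall>p::2 \<times> 2. P p) \<longleftrightarrow> P (1, 1) \<and> P (1, 2) \<and> P (2, 1) \<and> P (2, 2)"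
  unfolding split_paired_All forall_2 by blast

definition bit_flip :: "2 \<Rightarrow> 2" where
  "bit_flip i = (if i = 1 then 2 else 1)"

definition pair_flip :: "2 \<times> 2 \<Rightarrow> 2 \<times> 2" where
  "pair_flip p = (bit_flip (fst p), bit_flip (snd p))"

definition pair_sign :: "2 \<times> 2 \<Rightarrow> complex" where
  "pair_sign p = (if fst p = snd p then -1 else 1)"

text \<open>The spin flip M \<mapsto> Y M^T Y, where Y = \<sigma>_y \<otimes> \<sigma>_y has the nonzero entries
  Y(p, pair_flip p) = pair_sign p.\<close>

definition spin_flip :: "(2 \<times> 2) op \<Rightarrow> (2 \<times> 2) op" where
  "spin_flip M = (\<chi> p q. pair_sign p * pair_sign q * M $ pair_flip q $ pair_flip p)"

lemma bit_flip_simps [simp]: "bit_flip 1 = 2" "bit_flip 2 = 1"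
  by (auto simp: bit_flip_def)

lemma pair_flip_simps [simp]:
  "pair_flip (1, 1) = (2, 2)" "pair_flip (1, 2) = (2, 1)" "pair_flip (2, 1) = (1, 2)" "pair_flip (2, 2) = (1, 1)"
  by (auto simp: pair_flip_def)

lemma pair_sign_simps [simp]:
  "pair_sign (1, 1) = -1" "pair_sign (1, 2) = 1" "pair_sign (2, 1) = 1" "pair_sign (2, 2) = -1"
  by (auto simp: pair_sign_def)

lemma spin_flip_mult: "spin_flip (M ** N) = spin_flip N ** spin_flip M"
  by (simp add: spin_flip_def matrix_matrix_mult_def vec_eq_iff all_2x2 sum_UNIV_2x2 algebra_simps)

lemma qpsd_spin_flip:
  assumes "qpsd M"
  shows "qpsd (spin_flip M)"
  unfolding qpsd_iff_cinner
proof
  fix x :: "complex^(2 \<times> 2)"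
  define y where "y = (\<chi> p. pair_sign (pair_flip p) * cnj (x $ pair_flip p))"
  have "cinner x (spin_flip M *v x) = cinner y (M *v y)"
    by (simp add: y_def cinner_def spin_flip_def matrix_vector_mult_def sum_UNIV_2x2 algebra_simps)
  then show "\<exists>r\<ge>0. cinner x (spin_flip M *v x) = of_real r"
    using assms unfolding qpsd_iff_cinner by metis
qed

lemma spin_flip_fixed_imp_ptrace:
  assumes "spin_flip M = M"
  shows "ptrace1 M = mat (qtrace M / 2)" and "ptrace2 M = mat (qtrace M / 2)"
proof -
  have e: "M $ p $ q = pair_sign p * pair_sign q * M $ pair_flip q $ pair_flip p" for p q
    using arg_cong[OF assms, of "\<lambda>A. A $ p $ q"] by (simp add: spin_flip_def)
  have "qtrace M = 2 * M $ (2, 2) $ (2, 2) + 2 * M $ (2, 1) $ (2, 1)"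
    using e[of "(1, 1)" "(1, 1)"] e[of "(1, 2)" "(1, 2)"] by (simp add: qtrace_def sum_UNIV_2x2)
  then show "ptrace1 M = mat (qtrace M / 2)" and "ptrace2 M = mat (qtrace M / 2)"
    using e[of "(1, 1)" "(1, 1)"] e[of "(1, 2)" "(1, 2)"] e[of "(1, 1)" "(1, 2)"]
      e[of "(1, 2)" "(1, 1)"] e[of "(1, 1)" "(2, 1)"] e[of "(2, 1)" "(1, 1)"]
    by (simp_all add: vec_eq_iff ptrace1_def ptrace2_def mat_def forall_2 sum_2)
qed

lemma ptrace_scalar_imp_spin_flip_fixed:
  assumes "ptrace1 M = mat c" and "ptrace2 M = mat d"
  shows "spin_flip M = M"
proof -
  have p1: "(\<Sum>i\<in>UNIV. M $ (i, j) $ (i, j')) = mat c $ j $ j'" for j j'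
    using arg_cong[OF assms(1), of "\<lambda>A. A $ j $ j'"] by (simp add: ptrace1_def)
  have p2: "(\<Sum>j\<in>UNIV. M $ (i, j) $ (i', j)) = mat d $ i $ i'" for i i'
    using arg_cong[OF assms(2), of "\<lambda>A. A $ i $ i'"] by (simp add: ptrace2_def)
  have E1: "M $ (1, 1) $ (1, 1) + M $ (2, 1) $ (2, 1) = M $ (1, 2) $ (1, 2) + M $ (2, 2) $ (2, 2)"
    and E2: "M $ (1, 1) $ (1, 1) + M $ (1, 2) $ (1, 2) = M $ (2, 1) $ (2, 1) + M $ (2, 2) $ (2, 2)"
    using p1[of 1 1] p1[of 2 2] p2[of 1 1] p2[of 2 2] by (simp_all add: sum_2 mat_def)
  have "a = f \<and> e = b" if "a + b = e + f" and "a + e = b + f" for a b e f :: complex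
  proof -
    have "2 * a = 2 * f"
      using arg_cong2[OF that, of "(+)"] by (simp add: mult_2 algebra_simps)
    then show ?thesis
      using that(1) by simp
  qed
  from this[OF E1 E2] have diag:
    "M $ (1, 1) $ (1, 1) = M $ (2, 2) $ (2, 2)" "M $ (1, 2) $ (1, 2) = M $ (2, 1) $ (2, 1)"
    by simp_all
  have off_diag:
    "M $ (1, 1) $ (1, 2) = - M $ (2, 1) $ (2, 2)" "M $ (1, 2) $ (1, 1) = - M $ (2, 2) $ (2, 1)"
    "M $ (1, 1) $ (2, 1) = - M $ (1, 2) $ (2, 2)" "M $ (2, 1) $ (1, 1) = - M $ (2, 2) $ (1, 2)"
    using p1[of 1 2] p1[of 2 1] p2[of 1 2] p2[of 2 1]
    by (simp_all add: sum_2 mat_def eq_neg_iff_add_eq_0)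
  show ?thesis
    unfolding vec_eq_iff all_2x2 by (simp add: spin_flip_def diag off_diag)
qed

lemma spin_flip_qsqrt:
  assumes "qpsd M" and "spin_flip M = M"
  shows "spin_flip (qsqrt M) = qsqrt M"
proof -
  have "spin_flip (qsqrt M) ** spin_flip (qsqrt M) = M"
    using assms by (simp add: qsqrt_square flip: spin_flip_mult)
  then show ?thesis
    using qsqrt_unique[OF assms(1) qpsd_spin_flip[OF qpsd_qsqrt[OF assms(1)]]] by simp
qed

lemma qtrace_qsqrt_neq_0:
  assumes "qpsd M" and "M \<noteq> 0"
  shows "qtrace (qsqrt M) \<noteq> 0"
proof
  assume "qtrace (qsqrt M) = 0"
  then have "qsqrt M = 0"
    by (rule qpsd_trace_eq_0_imp_eq_0[OF qpsd_qsqrt[OF assms(1)]])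
  then show False
    using qsqrt_square[OF assms(1)] assms(2) by simp
qed

theorem lemma9:
  fixes U :: "(2 \<times> 2) op"
  assumes "qunitary U"
  defines "\<Phi>B \<equiv> ptrace1 (choi_bip (unitary_channel U))"
  defines "\<rho> \<equiv> (\<chi> i j. qsqrt \<Phi>B $ i $ j / qtrace (qsqrt \<Phi>B))"
  shows "ptrace2 \<rho> = mat (1/2) \<and> ptrace1 \<rho> = mat (1/2)"
proof -
  have \<Phi>_psd: "qpsd \<Phi>B"
    unfolding \<Phi>B_def by (rule qpsd_ptrace1_choi_unitary_channel)
  have \<Phi>_marginals: "ptrace1 \<Phi>B = mat (1/2)" "ptrace2 \<Phi>B = mat (1/2)"
    using choi_unitary_channel_marginals[OF assms(1)] by (simp_all add: \<Phi>B_def)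
  define S where "S = qsqrt \<Phi>B"
  have "spin_flip S = S"
    unfolding S_def by (rule spin_flip_qsqrt[OF \<Phi>_psd ptrace_scalar_imp_spin_flip_fixed[OF \<Phi>_marginals]])
  then have S_marginals: "ptrace1 S = mat (qtrace S / 2)" "ptrace2 S = mat (qtrace S / 2)"
    by (rule spin_flip_fixed_imp_ptrace)+
  have "ptrace2 \<Phi>B $ 1 $ 1 \<noteq> 0"
    using \<Phi>_marginals(2) by (simp add: mat_def)
  then have "\<Phi>B \<noteq> 0"
    by (auto simp: ptrace2_def)
  then have "qtrace S \<noteq> 0"
    unfolding S_def by (rule qtrace_qsqrt_neq_0[OF \<Phi>_psd])
  moreover have "ptrace1 \<rho> = (\<chi> i j. ptrace1 S $ i $ j / qtrace S)"
    and "ptrace2 \<rho> = (\<chi> i j. ptrace2 S $ i $ j / qtrace S)"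
    by (simp_all add: \<rho>_def S_def ptrace1_def ptrace2_def vec_eq_iff sum_divide_distrib)
  ultimately show ?thesis
    by (simp add: S_marginals vec_eq_iff mat_def)
qed

end
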